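(* There exist domains $D_1$ and $D_2$ in $\mathbb{R}^2$ with $D_1\subset D_2$, such that $\mathbb{R}^2\setminus D_2$ contains at least two points, and a point $z\in D_1$ such that $$\lambda_{D_2}(z)=\lambda''_{D_2}(z)=\lambda'_{D_2}(z)>\lambda'_{D_1}(z)>\lambda''_{D_1}(z).$$ In particular $\lambda'_{D_2}(z)>\lambda'_{D_1}(z)$ and $\lambda''_{D_2}(z)>\lambda''_{D_1}(z)$.
   Context: Write $d(z,\partial D)=\inf\{|z-a|:a\in\partial D\}$ and $Q(z;a,b)=|z-a|\big(1+\big|\log\frac{|a-b|}{|z-a|}\big|\big)$ (equal to $+\infty$ when $a=b$). For a domain $D\subset\mathbb{R}^2$ whose complement contains at least two points and $z\in D$ define $1/\lambda_D(z)=\inf\{Q(z;a,b): a,b\in\mathbb{R}^2\setminus D\}$, $1/\lambda'_D(z)=\inf\{Q(z;a,b): a,b\in\partial D\}$, $1/\lambda''_D(z)=\inf\{Q(z;a,b): a,b\in\partial D,\ |z-a|=d(z,\partial D)\}$. *)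

theory Defs
  imports "HOL-Analysis.Analysis"
begin

definition Qf :: "complex \<Rightarrow> complex \<Rightarrow> complex \<Rightarrow> ereal" where
  "Qf z a b = (if a = b then \<infinity>
     else ereal (cmod (z - a) * (1 + \<bar>ln (cmod (a - b) / cmod (z - a))\<bar>)))"

definition dist_bd :: "complex \<Rightarrow> complex set \<Rightarrow> real" where
  "dist_bd z D = Inf {cmod (z - a) | a. a \<in> frontier D}"

definition lam :: "complex set \<Rightarrow> complex \<Rightarrow> ereal" where
  "lam D z = inverse (Inf {Qf z a b | a b. a \<notin> D \<and> b \<notin> D})"

definition lam' :: "complex set \<Rightarrow> complex \<Rightarrow> ereal" where
  "lam' D z = inverse (Inf {Qf z a b | a b. a \<in> frontier D \<and> b \<in> frontier D})"

definition lam'' :: "complex set \<Rightarrow> complex \<Rightarrow> ereal" where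
  "lam'' D z = inverse (Inf {Qf z a b | a b. a \<in> frontier D \<and> b \<in> frontier D
                                \<and> cmod (z - a) = dist_bd z D})"

definition domain :: "complex set \<Rightarrow> bool" where
  "domain D \<longleftrightarrow> open D \<and> connected D \<and> D \<noteq> {}"

end

theory Submission
  imports Defs
begin

(* The outer domain is C - {1, 2}, the inner one also omits the closed disc of radius 1/5
   about 1, and z = 0.  Every pair (a, b) relevant for the outer domain has Q >= |a| >= 1, with
   equality for (1, 2).  The boundary of the inner domain is the circle |a - 1| = 1/5 together
   with 2.  Two points of the circle are close compared with their distance to 0, so Q >= 6/5;
   for a on the circle and b = 2, ln x >= 1 - 1/x and the parallelogram law give Q >= 101/100,
   whereas a = 1 + i/5, equidistant from 0 and 2, has Q = |a| < 51/50.  The nearest boundary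
   point 4/5 is far from 2, which pushes all its pairs up to Q >= 16/15. *)

lemma Qf_ge_norm: "ereal (cmod (z - a)) \<le> Qf z a b"
  unfolding Qf_def by (simp add: mult_le_cancel_left1)

lemma Qf_nonneg: "0 \<le> Qf z a b"
  by (rule order_trans[OF _ Qf_ge_norm]) simp

lemma Qf_eq_norm:
  assumes "a \<noteq> b" "cmod (a - b) = cmod (z - a)"
  shows "Qf z a b = ereal (cmod (z - a))"
  using assms unfolding Qf_def by auto

lemma Qf_ge_near:
  assumes "cmod (a - b) \<le> cmod (z - a) / 2"
  shows "ereal (3/2 * cmod (z - a)) \<le> Qf z a b"
proof (cases "a = b")
  case False
  let ?r = "cmod (z - a)" and ?d = "cmod (a - b)"
  have "0 < ?d" using False by simp
  then have "0 < ?r" using assms by linarith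
  have "ln (?d / ?r) \<le> ?d / ?r - 1"
    using \<open>0 < ?d\<close> \<open>0 < ?r\<close> by (intro ln_le_minus_one) simp
  also have "?d / ?r \<le> 1/2"
    using assms \<open>0 < ?r\<close> by (simp add: divide_simps)
  finally have "3/2 \<le> 1 + \<bar>ln (?d / ?r)\<bar>" by linarith
  then have "?r * (3/2) \<le> ?r * (1 + \<bar>ln (?d / ?r)\<bar>)"
    using \<open>0 < ?r\<close> by (intro mult_left_mono) auto
  then show ?thesis using False unfolding Qf_def by (simp add: mult.commute)
qed (simp add: Qf_def)

lemma Qf_ge_far:
  assumes "cmod (z - a) \<le> cmod (a - b)"
  shows "ereal (cmod (z - a) * (2 - cmod (z - a) / cmod (a - b))) \<le> Qf z a b"
proof (cases "a = b \<or> z = a")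
  case False
  let ?r = "cmod (z - a)" and ?d = "cmod (a - b)"
  have "0 < ?r" using False by simp
  moreover have "0 < ?d" using assms \<open>0 < ?r\<close> by linarith
  ultimately have "ln (?r / ?d) \<le> ?r / ?d - 1" by (intro ln_le_minus_one) simp
  moreover have "ln (?d / ?r) = - ln (?r / ?d)"
    using \<open>0 < ?r\<close> assms by (simp add: ln_div)
  ultimately have "2 - ?r / ?d \<le> 1 + \<bar>ln (?d / ?r)\<bar>" by linarith
  then have "?r * (2 - ?r / ?d) \<le> ?r * (1 + \<bar>ln (?d / ?r)\<bar>)"
    using \<open>0 < ?r\<close> by (intro mult_left_mono) auto
  then show ?thesis using False unfolding Qf_def by simp
qed (auto simp: Qf_def)

lemma inverse_Inf_le:
  fixes S :: "ereal set"
  assumes "0 < c" "\<And>x. x \<in> S \<Longrightarrow> ereal c \<le> x"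
  shows "inverse (Inf S) \<le> ereal (1 / c)"
proof -
  have "ereal c \<le> Inf S" using assms(2) by (rule Inf_greatest)
  then have "inverse (Inf S) \<le> inverse (ereal c)"
    using assms(1) by (intro ereal_inverse_antimono) auto
  then show ?thesis using assms(1) by (simp add: inverse_eq_divide)
qed

lemma le_inverse_Inf:
  fixes S :: "ereal set"
  assumes "0 < c" "x \<in> S" "x \<le> ereal c" "\<And>y. y \<in> S \<Longrightarrow> 0 \<le> y"
  shows "ereal (1 / c) \<le> inverse (Inf S)"
proof -
  have "Inf S \<le> ereal c" using Inf_lower[OF assms(2)] assms(3) by (rule order_trans)
  moreover have "0 \<le> Inf S" using assms(4) by (rule Inf_greatest)
  ultimately have "inverse (ereal c) \<le> inverse (Inf S)"
    by (rule ereal_inverse_antimono[rotated])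
  then show ?thesis using assms(1) by (simp add: inverse_eq_divide)
qed

lemma dist_bd_eqI:
  assumes "a \<in> frontier D" "\<And>b. b \<in> frontier D \<Longrightarrow> cmod (z - a) \<le> cmod (z - b)"
  shows "dist_bd z D = cmod (z - a)"
  unfolding dist_bd_def using assms by (intro cInf_eq_minimum) auto

lemma frontier_Compl_finite:
  fixes S :: "'a::{real_normed_vector, perfect_space} set"
  assumes "finite S"
  shows "frontier (- S) = S"
proof -
  have "frontier S = S"
    using assms by (simp add: frontier_def empty_interior_finite finite_imp_closed)
  then show ?thesis by (simp only: frontier_complement)
qed

lemma frontier_Compl_cball_Un_finite:
  fixes a :: "'a::{real_normed_vector, perfect_space}"
  assumes "finite S" "S \<inter> ball a r = {}"
  shows "frontier (- (cball a r \<union> S)) = sphere a r \<union> S"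
proof -
  have "interior (cball a r \<union> S) = ball a r"
    using assms(1) by (simp add: interior_closed_Un_empty_interior empty_interior_finite)
  moreover have "closure (cball a r \<union> S) = cball a r \<union> S"
    using assms(1) by (simp add: closed_Un finite_imp_closed)
  ultimately have "frontier (cball a r \<union> S) = sphere a r \<union> S"
    using assms(2) unfolding frontier_def by auto
  then show ?thesis by (simp only: frontier_complement)
qed

lemma domain_Compl_convex_Un_finite:
  fixes K S :: "complex set"
  assumes "compact K" "convex K" "finite S"
  shows "domain (- (K \<union> S))"
  unfolding domain_def
proof (intro conjI)
  have "bounded (K \<union> S)" using assms by (simp add: compact_imp_bounded finite_imp_bounded)
  then show "- (K \<union> S) \<noteq> {}" using not_bounded_UNIV by (metis Compl_empty_eq double_compl)
  show "open (- (K \<union> S))"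
    using assms by (intro open_Compl closed_Un) (auto simp: compact_imp_closed finite_imp_closed)
  have "connected (- K)"
    using assms by (intro connected_complement_bounded_convex) (auto simp: compact_imp_bounded)
  then have "connected (- K - S)"
    using assms by (intro connected_open_delete_finite) (auto simp: compact_imp_closed)
  then show "connected (- (K \<union> S))" by (simp add: Diff_eq)
qed

lemma norm_ge_on_sphere: "a \<in> sphere (1::complex) (1/5) \<Longrightarrow> 4/5 \<le> cmod a"
  using norm_triangle_sub[of 1 a] by (simp add: dist_norm norm_minus_commute)

lemma Qf_sphere_sphere:
  assumes "a \<in> sphere (1::complex) (1/5)" "b \<in> sphere 1 (1/5)"
  shows "ereal (6/5) \<le> Qf 0 a b"
proof -
  have "dist a b \<le> 2/5" using dist_triangle[of a b 1] assms by (simp add: dist_commute)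
  then have "cmod (a - b) \<le> 2/5" by (simp add: dist_norm)
  then have "ereal (3/2 * cmod a) \<le> Qf 0 a b"
    using Qf_ge_near[of a b 0] norm_ge_on_sphere[OF assms(1)] by simp
  then show ?thesis
    using norm_ge_on_sphere[OF assms(1)] by (simp add: order_trans[rotated])
qed

(* Subtracting a cubic that vanishes at both ends of the interval leaves a positive linear remainder. *)
lemma cubic_bound:
  fixes r :: real
  assumes "4/5 \<le> r" "r \<le> 101/100"
  shows "101/50 * (52/25 - r^2) \<le> r * (3 * (52/25 - r^2) - r^2)"
proof -
  have "r * (3 * (52/25 - r^2) - r^2) - 101/50 * (52/25 - r^2)
      = (r - 4/5) * (101/100 - r) * (4 * r + 522/100) + 238/10000 * r + 1616/100000"
    by algebra
  moreover have "0 \<le> (r - 4/5) * (101/100 - r) * (4 * r + 522/100)"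
    using assms by (intro mult_nonneg_nonneg) auto
  ultimately show ?thesis using assms by linarith
qed

(* Weakening 2 - t to (3 - t^2)/2 trades the square root d for d^2 = 52/25 - r^2. *)
lemma sphere_two_estimate:
  fixes r d :: real
  assumes r: "4/5 \<le> r" "r \<le> 101/100" and "r < d" and parallelogram: "r^2 + d^2 = 52/25"
  shows "101/100 \<le> r * (2 - r / d)"
proof -
  have "0 < d" using assms by linarith
  have "(3 - t^2) / 2 \<le> 2 - t" for t :: real
    using zero_le_power2[of "1 - t"] unfolding power2_diff by simp
  then have "(3 - (r / d)^2) / 2 \<le> 2 - r / d" .
  then have "r * (3 - (r / d)^2) / 2 \<le> r * (2 - r / d)"
    using r by (simp add: mult_left_mono)
  moreover have "r * (3 - (r / d)^2) / 2 = r * (3 * d^2 - r^2) / (2 * d^2)"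
    using \<open>0 < d\<close> by (simp add: field_simps power_divide)
  moreover have "d^2 = 52/25 - r^2" using parallelogram by simp
  then have "101/50 * d^2 \<le> r * (3 * d^2 - r^2)"
    using cubic_bound[OF r] by simp
  then have "101/100 \<le> r * (3 * d^2 - r^2) / (2 * d^2)"
    using \<open>0 < d\<close> by (simp add: field_simps)
  ultimately show ?thesis by linarith
qed

lemma Qf_sphere_two:
  assumes "a \<in> sphere (1::complex) (1/5)"
  shows "ereal (101/100) \<le> Qf 0 a 2"
proof -
  let ?r = "cmod a" and ?d = "cmod (a - 2)"
  have r: "4/5 \<le> ?r" using norm_ge_on_sphere[OF assms] .
  have radius: "cmod (a - 1) = 1/5" using assms by (simp add: dist_norm norm_minus_commute)
  have "cmod (a - 1) ^ 2 = 1/25" unfolding radius by (simp add: power_divide)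
  then have parallelogram: "?r^2 + ?d^2 = 52/25"
    unfolding cmod_power2 by (simp add: power2_eq_square algebra_simps)
  show ?thesis
  proof (cases "101/100 \<le> ?r")
    case True
    then show ?thesis using Qf_ge_norm[of 0 a 2] by (simp add: order_trans[rotated])
  next
    case False
    have "?r * ?r \<le> 101/100 * (101/100)" using False r by (intro mult_mono) auto
    then have "?r^2 < ?d^2"
      using parallelogram unfolding power2_eq_square by linarith
    then have "?r < ?d" by (rule power_less_imp_less_base) simp
    then have "101/100 \<le> ?r * (2 - ?r / ?d)"
      using sphere_two_estimate r False parallelogram by simp
    then show ?thesis
      using Qf_ge_far[of 0 a 2] \<open>?r < ?d\<close> by (simp add: order_trans[rotated])
  qed
qed

lemma Qf_frontier_ge:
  assumes "a \<in> sphere (1::complex) (1/5) \<union> {2}" "b \<in> sphere 1 (1/5) \<union> {2}"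
  shows "ereal (101/100) \<le> Qf 0 a b"
proof -
  consider "a = 2" | "a \<in> sphere 1 (1/5)" "b = 2" | "a \<in> sphere 1 (1/5)" "b \<in> sphere 1 (1/5)"
    using assms by blast
  then show ?thesis
  proof cases
    case 1
    then show ?thesis using Qf_ge_norm[of 0 a b] by (simp add: order_trans[rotated])
  next
    case 2
    then show ?thesis using Qf_sphere_two by simp
  next
    case 3
    then show ?thesis using Qf_sphere_sphere[of a b] by (simp add: order_trans[rotated])
  qed
qed

lemma Qf_frontier_nearest_ge:
  assumes "a \<in> sphere (1::complex) (1/5) \<union> {2}" "b \<in> sphere 1 (1/5) \<union> {2}"
    and "cmod a = 4/5"
  shows "ereal (16/15) \<le> Qf 0 a b"
proof (cases "b = 2")
  case True
  have "6/5 \<le> cmod (a - 2)"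
    using norm_triangle_sub[of 2 a] assms(3) by (simp add: norm_minus_commute)
  then have "4/5 / cmod (a - 2) \<le> 2/3" by (simp add: divide_simps)
  then have "16/15 \<le> cmod a * (2 - cmod a / cmod (a - 2))"
    unfolding assms(3) by (simp add: right_diff_distrib)
  moreover have "cmod a \<le> cmod (a - 2)" using \<open>6/5 \<le> cmod (a - 2)\<close> assms(3) by simp
  ultimately show ?thesis
    using True Qf_ge_far[of 0 a 2] by (simp add: order_trans[rotated])
next
  case False
  have "a \<noteq> 2" using assms(3) by auto
  then show ?thesis
    using False assms Qf_sphere_sphere[of a b] by (simp add: order_trans[rotated])
qed

lemma Qf_equidistant_witness: "Qf 0 (1 + \<i>/5) 2 \<le> ereal (51/50)"
proof -
  have "cmod (1 + \<i>/5) ^ 2 \<le> (51/50)^2"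
    unfolding cmod_power2 by (simp add: power2_eq_square)
  then have "cmod (1 + \<i>/5) \<le> 51/50" by (rule power2_le_imp_le) simp
  moreover have "Qf 0 (1 + \<i>/5) 2 = ereal (cmod (1 + \<i>/5))"
    using Qf_eq_norm[of "1 + \<i>/5" 2 0] by (simp add: complex_eq_iff cmod_def)
  ultimately show ?thesis by simp
qed

lemma Inf_Qf_one_two:
  assumes "\<And>a b. P a b \<Longrightarrow> a \<in> {1::complex, 2}" "P 1 2"
  shows "Inf {Qf 0 a b | a b. P a b} = 1"
proof (rule antisym)
  have "Qf 0 1 2 = 1" by (subst Qf_eq_norm) (auto simp: one_ereal_def)
  then show "Inf {Qf 0 a b | a b. P a b} \<le> 1"
    using assms(2) by (metis (mono_tags, lifting) Inf_lower mem_Collect_eq)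
  have "1 \<le> Qf 0 a b" if "a \<in> {1, 2}" for a b
    using that Qf_ge_norm[of 0 a b] by (auto simp: one_ereal_def order_trans[rotated])
  then show "1 \<le> Inf {Qf 0 a b | a b. P a b}"
    using assms(1) by (intro Inf_greatest) blast
qed

definition outer_domain :: "complex set" where
  "outer_domain = - {1, 2}"

definition inner_domain :: "complex set" where
  "inner_domain = - (cball 1 (1/5) \<union> {2})"

lemma frontier_outer_domain: "frontier outer_domain = {1, 2}"
  unfolding outer_domain_def by (rule frontier_Compl_finite) simp

lemma frontier_inner_domain: "frontier inner_domain = sphere 1 (1/5) \<union> {2}"
  unfolding inner_domain_def by (rule frontier_Compl_cball_Un_finite) (auto simp: dist_norm)

lemma domain_outer_domain: "domain outer_domain"
  using domain_Compl_convex_Un_finite[of "{}" "{1, 2}"] unfolding outer_domain_def by simp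

lemma domain_inner_domain: "domain inner_domain"
  unfolding inner_domain_def by (rule domain_Compl_convex_Un_finite) auto

lemma inner_domain_subset: "inner_domain \<subseteq> outer_domain"
  unfolding inner_domain_def outer_domain_def by auto

lemma lam_outer_domain:
  "lam outer_domain 0 = 1" "lam' outer_domain 0 = 1" "lam'' outer_domain 0 = 1"
proof -
  have "dist_bd 0 outer_domain = 1"
    by (subst dist_bd_eqI[of 1]) (auto simp: frontier_outer_domain)
  then show "lam outer_domain 0 = 1" "lam' outer_domain 0 = 1" "lam'' outer_domain 0 = 1"
    unfolding lam_def lam'_def lam''_def frontier_outer_domain
    by (subst Inf_Qf_one_two; auto simp: outer_domain_def)+
qed

lemma dist_bd_inner_domain: "dist_bd 0 inner_domain = 4/5"
proof -
  have "(4/5::complex) \<in> sphere 1 (1/5)" by (simp add: dist_norm)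
  moreover have "4/5 \<le> cmod b" if "b \<in> frontier inner_domain" for b
    using that norm_ge_on_sphere[of b] unfolding frontier_inner_domain by auto
  ultimately show ?thesis
    by (subst dist_bd_eqI[of "4/5"]) (auto simp: frontier_inner_domain)
qed

lemma lam''_inner_domain_le: "lam'' inner_domain 0 \<le> ereal (15/16)"
proof -
  have "lam'' inner_domain 0 \<le> ereal (1 / (16/15))"
    unfolding lam''_def frontier_inner_domain dist_bd_inner_domain
    by (intro inverse_Inf_le) (auto intro: Qf_frontier_nearest_ge)
  then show ?thesis by simp
qed

lemma lam'_inner_domain_bounds:
  "ereal (50/51) \<le> lam' inner_domain 0" "lam' inner_domain 0 \<le> ereal (100/101)"
proof -
  have "(1 + \<i>/5 :: complex) \<in> sphere 1 (1/5)" by (simp add: dist_norm)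
  then have "ereal (1 / (51/50)) \<le> lam' inner_domain 0"
    unfolding lam'_def frontier_inner_domain
    by (intro le_inverse_Inf[OF _ _ Qf_equidistant_witness]) (auto simp: Qf_nonneg)
  then show "ereal (50/51) \<le> lam' inner_domain 0" by simp
  have "lam' inner_domain 0 \<le> ereal (1 / (101/100))"
    unfolding lam'_def frontier_inner_domain
    by (intro inverse_Inf_le) (auto intro: Qf_frontier_ge)
  then show "lam' inner_domain 0 \<le> ereal (100/101)" by simp
qed

theorem lemma5:
  shows "\<exists>D1 D2 z. domain D1 \<and> domain D2 \<and> D1 \<subseteq> D2 \<and>
     (\<exists>p q. p \<noteq> q \<and> p \<notin> D2 \<and> q \<notin> D2) \<and> z \<in> D1 \<and>
     lam D2 z = lam'' D2 z \<and> lam'' D2 z = lam' D2 z \<and>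
     lam' D2 z > lam' D1 z \<and> lam' D1 z > lam'' D1 z \<and>
     lam' D2 z > lam' D1 z \<and> lam'' D2 z > lam'' D1 z"
proof -
  have "lam' inner_domain 0 \<le> ereal (100/101)" by (fact lam'_inner_domain_bounds(2))
  also have "\<dots> < 1" by (simp add: one_ereal_def)
  finally have lam'_lt: "lam' inner_domain 0 < 1" .
  have "lam'' inner_domain 0 \<le> ereal (15/16)" by (fact lam''_inner_domain_le)
  also have "\<dots> < ereal (50/51)" by simp
  also have "\<dots> \<le> lam' inner_domain 0" by (fact lam'_inner_domain_bounds(1))
  finally have "lam'' inner_domain 0 < lam' inner_domain 0" .
  moreover have "0 \<in> inner_domain" "1 \<notin> outer_domain" "2 \<notin> outer_domain"
    unfolding inner_domain_def outer_domain_def by (auto simp: dist_norm)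
  ultimately show ?thesis
    using lam'_lt domain_inner_domain domain_outer_domain inner_domain_subset
    by (intro exI[of _ inner_domain] exI[of _ outer_domain] exI[of _ 0] conjI exI[of _ 1] exI[of _ 2])
       (simp_all add: lam_outer_domain)
qed

end
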